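(* Let $F=\{\mathbf{p}_0,\ldots,\mathbf{p}_n\}\subset\mathbb{R}^d$ be not contained in any $(d-1)$-dimensional affine subspace and let $k\ge1$. There exists a set $\mathcal{O}\subseteq\mathcal{P}_k$ which is open and dense in $\mathcal{P}_k$ such that for every $(\lambda_0,\ldots,\lambda_n)\in\mathcal{O}$, for the IFS $S_i(\mathbf{x})=\lambda_i\mathbf{x}+(1-\lambda_i)\mathbf{p}_i$ ($i=0,\ldots,n$), the set $X_k$ contains an open dense subset of $X$ and Lebesgue almost every $\mathbf{x}\in X$ belongs to $X_k$.
   Context: Write $\mathcal{D}=\{0,\ldots,n\}$ and $\mathcal{P}_k=\{(\lambda_i)_{i\in\mathcal{D}}:\lambda_i\in(0,1),\ \prod_{i\in\mathcal{D}}\lambda_i^{k(n+1)^{k-1}}\ge\frac{d}{d+1}\}$, with the topology inherited from $\mathbb{R}^{n+1}$. $X$ is the unique non-empty compact set with $X=\bigcup_{i\in\mathcal{D}}S_i(X)$; "open dense subset of $X$" refers to the relative topology of $X$. The coding map is $\pi(\mathbf{a})=\lim_{j\to\infty}(S_{a_1}\circ\cdots\circ S_{a_j})(\mathbf{0})$. For $\mathbf{b}\in\mathcal{D}^k$, $\mathrm{freq}_{\mathbf{b}}(\mathbf{a})=\lim_{m\to\infty}\frac1m\#\{1\le j\le m:a_j\cdots a_{j+k-1}=\mathbf{b}\}$; $\mathbf{a}$ is $k$-simply normal if this equals $(n+1)^{-k}$ for all $\mathbf{b}\in\mathcal{D}^k$. $X_k$ is the set of $\mathbf{x}\in X$ having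 a $k$-simply normal $\mathbf{a}$ with $\pi(\mathbf{a})=\mathbf{x}$. *)

theory Defs
  imports "HOL-Analysis.Analysis"
begin

text \<open>Digit set D = {0,...,n} is modelled by a finite type 'i with CARD('i) = n+1.
  Parameters (lambda_i) live in real^'i (= R^(n+1) with its Euclidean topology).\<close>

definition ifs_map :: "real^'i \<Rightarrow> ('i \<Rightarrow> 'a::real_vector) \<Rightarrow> 'i \<Rightarrow> 'a \<Rightarrow> 'a" where
  "ifs_map lam p i x = (lam $ i) *\<^sub>R x + (1 - lam $ i) *\<^sub>R p i"

definition param_set :: "nat \<Rightarrow> nat \<Rightarrow> (real^'i::finite) set" where
  "param_set d k = {lam. (\<forall>i. 0 < lam $ i \<and> lam $ i < 1) \<and>
      (\<Prod>i\<in>UNIV. (lam $ i) ^ (k * CARD('i) ^ (k - 1))) \<ge> real d / (real d + 1)}"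

definition attractor :: "('i::finite \<Rightarrow> 'a::metric_space \<Rightarrow> 'a) \<Rightarrow> 'a set" where
  "attractor S = (THE X. compact X \<and> X \<noteq> {} \<and> X = (\<Union>i. S i ` X))"

text \<open>compose S a j = S (a 0) o ... o S (a (j-1)), i.e. S_{a_1} o ... o S_{a_j}
  with the paper's 1-based indexing shifted to 0-based.\<close>
primrec compose :: "('i \<Rightarrow> 'a \<Rightarrow> 'a) \<Rightarrow> (nat \<Rightarrow> 'i) \<Rightarrow> nat \<Rightarrow> 'a \<Rightarrow> 'a" where
  "compose S a 0 = id"
| "compose S a (Suc j) = compose S a j \<circ> S (a j)"

definition coding :: "('i \<Rightarrow> 'a::real_normed_vector \<Rightarrow> 'a) \<Rightarrow> (nat \<Rightarrow> 'i) \<Rightarrow> 'a" where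
  "coding S a = lim (\<lambda>j. compose S a j 0)"

text \<open>freq_b(a) = lim_m (1/m) #{1 <= j <= m : a_j ... a_{j+k-1} = b}, 0-based.\<close>
definition block_count :: "(nat \<Rightarrow> 'i) \<Rightarrow> 'i list \<Rightarrow> nat \<Rightarrow> nat" where
  "block_count a b m = card {j. j < m \<and> map a [j..<j + length b] = b}"

definition simply_normal :: "nat \<Rightarrow> (nat \<Rightarrow> 'i::finite) \<Rightarrow> bool" where
  "simply_normal k a \<longleftrightarrow> (\<forall>b::'i list. length b = k \<longrightarrow>
      (\<lambda>m. real (block_count a b m) / real m) \<longlonglongrightarrow> 1 / real (CARD('i)) ^ k)"

definition normal_points :: "nat \<Rightarrow> ('i::finite \<Rightarrow> 'a::real_normed_vector \<Rightarrow> 'a) \<Rightarrow> 'a set" where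
  "normal_points k S = {x \<in> attractor S. \<exists>a. simply_normal k a \<and> coding S a = x}"

end

(*
  Write B = n + 1 and let W be the word of length L = k B^k obtained by writing the numerals
  0, ..., B^k - 1 in base B with k digits each. Cyclically, every word of length k occurs
  exactly k times in W, so every digit occurs k B^(k-1) times and the composition S_W
  contracts by rho = prod_i lambda_i^(k B^(k-1)), which is at least d/(d+1) on P_k.

  Let z_x be the fixed point of the rotation of W by k x (x < B), and Delta their convex hull.
  Splitting a rotation as X @ Y gives z = S_X(z') with z' the fixed point of Y @ X; since the
  x-th block of W is k - 1 zeros followed by the digit x, induction on x shows that every p_i
  lies in the affine hull of the z_x, so Delta has nonempty interior. By Caratheodory every point of Delta has a
  barycentric weight at least 1/(d+1) >= 1 - rho at some vertex z_x, hence Delta is covered by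
  the images S_{rot_x W}(Delta). Iterating, every point of Delta is coded by a concatenation of
  rotations of W. Across block boundaries such a concatenation only reads the leading zeros that
  the cyclic word shows as well, so every k-block count stays within a bounded distance of
  m / B^k: the coding is k-simply normal.

  Consequently the union U of the images of the interior of Delta under all cylinder maps is
  open, dense in X and consists of normal points, and X - U is Lebesgue null, since every ball
  around a point of X contains a cylinder image of the interior of Delta of proportional volume.
  This works for every parameter in P_k.
*)

theory Submission
  imports Defs
begin

section \<open>Lebesgue density\<close>

lemma measure_disjoint_balls_le:
  fixes E :: "'a::euclidean_space set"
  assumes E: "E \<in> lmeasurable" and F: "finite F" and c: "c > 0" and T: "T - E \<in> lmeasurable"
    and disj: "pairwise (\<lambda>i j. disjnt (ball (fst i) (snd i)) (ball (fst j) (snd j))) F"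
    and gaps: "\<And>i. i \<in> F \<Longrightarrow> ball (fst i) (snd i) \<subseteq> T \<and>
        c * measure lebesgue (ball (fst i) (snd i)) \<le> measure lebesgue (ball (fst i) (snd i) - E)"
  shows "c * measure lebesgue (\<Union>i\<in>F. E \<inter> ball (fst i) (snd i)) \<le> measure lebesgue (T - E)"
proof -
  let ?\<mu> = "measure lebesgue" and ?b = "\<lambda>i. ball (fst i) (snd i)"
  have "c * ?\<mu> (\<Union>i\<in>F. E \<inter> ?b i) \<le> c * (\<Sum>i\<in>F. ?\<mu> (E \<inter> ?b i))"
    using c E F by (intro mult_left_mono measure_UNION_le) auto
  also have "\<dots> \<le> (\<Sum>i\<in>F. ?\<mu> (?b i - E))"
    unfolding sum_distrib_left
  proof (rule sum_mono)
    fix i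
    assume "i \<in> F"
    then have "c * ?\<mu> (?b i) \<le> ?\<mu> (?b i - E)"
      using gaps by blast
    moreover have "?\<mu> (E \<inter> ?b i) \<le> ?\<mu> (?b i)"
      using E by (intro measure_mono_fmeasurable) auto
    ultimately show "c * ?\<mu> (E \<inter> ?b i) \<le> ?\<mu> (?b i - E)"
      using c by (meson mult_left_mono order_trans less_imp_le)
  qed
  also have "\<dots> = ?\<mu> (\<Union>i\<in>F. ?b i - E)"
  proof (rule measure_UNION'[symmetric])
    show "pairwise (\<lambda>i j. disjnt (?b i - E) (?b j - E)) F"
      using disj unfolding pairwise_def disjnt_def by blast
  qed (use F E in \<open>auto intro: fmeasurable_Diff\<close>)
  also have "\<dots> \<le> ?\<mu> (T - E)"
  proof (rule measure_mono_fmeasurable)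
    show "(\<Union>i\<in>F. ?b i - E) \<subseteq> T - E"
      using gaps by blast
  qed (use F E T in \<open>auto intro!: sets.finite_UN intro: fmeasurableD\<close>)
  finally show ?thesis .
qed

lemma measure_le_if_disjoint_balls_cover:
  fixes E :: "'a::euclidean_space set"
  assumes E: "E \<in> lmeasurable" and c: "c > 0" and T: "T - E \<in> lmeasurable" and C: "countable C"
    and disj: "pairwise (\<lambda>i j. disjnt (ball (fst i) (snd i)) (ball (fst j) (snd j))) C"
    and null: "negligible (E - (\<Union>i\<in>C. ball (fst i) (snd i)))"
    and gaps: "\<And>i. i \<in> C \<Longrightarrow> ball (fst i) (snd i) \<subseteq> T \<and>
        c * measure lebesgue (ball (fst i) (snd i)) \<le> measure lebesgue (ball (fst i) (snd i) - E)"
  shows "c * measure lebesgue E \<le> measure lebesgue (T - E)"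
proof -
  let ?\<mu> = "measure lebesgue"
  have "?\<mu> (\<Union>i\<in>F. E \<inter> ball (fst i) (snd i)) \<le> ?\<mu> (T - E) / c" if F: "F \<subseteq> C" "finite F" for F
  proof -
    have "c * ?\<mu> (\<Union>i\<in>F. E \<inter> ball (fst i) (snd i)) \<le> ?\<mu> (T - E)"
      using F gaps pairwise_subset[OF disj F(1)] by (intro measure_disjoint_balls_le[OF E F(2) c T]) auto
    then show ?thesis
      using c by (simp add: field_simps)
  qed
  then have "?\<mu> (\<Union>i\<in>C. E \<inter> ball (fst i) (snd i)) \<le> ?\<mu> (T - E) / c"
    using E by (intro measure_UN_bound[OF C]) auto
  moreover have "?\<mu> (\<Union>i\<in>C. E \<inter> ball (fst i) (snd i)) = ?\<mu> E"
  proof -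
    have "(\<Union>i\<in>C. E \<inter> ball (fst i) (snd i)) = E - (E - (\<Union>i\<in>C. ball (fst i) (snd i)))"
      by blast
    then show ?thesis
      using E null by (simp add: measure_Diff_null_set negligible_iff_null_sets)
  qed
  ultimately show ?thesis
    using c by (simp add: field_simps)
qed

lemma measure_le_if_density_gaps:
  fixes E :: "'a::euclidean_space set"
  assumes E: "E \<in> lmeasurable" and T: "open T" "E \<subseteq> T" "T - E \<in> lmeasurable" and c: "c > 0"
    and gaps: "\<And>x d. x \<in> E \<Longrightarrow> d > 0 \<Longrightarrow>
        \<exists>r. 0 < r \<and> r < d \<and> c * measure lebesgue (ball x r) \<le> measure lebesgue (ball x r - E)"
  shows "c * measure lebesgue E \<le> measure lebesgue (T - E)"
proof -
  let ?\<mu> = "measure lebesgue"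
  define K where "K = {(x, r). x \<in> E \<and> ball x r \<subseteq> T \<and> c * ?\<mu> (ball x r) \<le> ?\<mu> (ball x r - E)}"
  have "\<exists>i. i \<in> K \<and> x \<in> ball (fst i) (snd i) \<and> snd i < d" if x: "x \<in> E" and d: "d > 0" for x d
  proof -
    obtain d1 where d1: "d1 > 0" "ball x d1 \<subseteq> T"
      using T x open_contains_ball by blast
    obtain r where "0 < r" "r < min d d1" "c * ?\<mu> (ball x r) \<le> ?\<mu> (ball x r - E)"
      using gaps[OF x, of "min d d1"] d d1 by auto
    moreover have "ball x r \<subseteq> T"
      using d1 \<open>r < min d d1\<close> by (meson min.strict_boundedE order_trans order.strict_implies_order subset_ball)
    ultimately show ?thesis
      using x by (intro exI[of _ "(x, r)"]) (auto simp: K_def)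
  qed
  then obtain C where C: "countable C" "C \<subseteq> K"
    and disj: "pairwise (\<lambda>i j. disjnt (ball (fst i) (snd i)) (ball (fst j) (snd j))) C"
    and null: "negligible (E - (\<Union>i\<in>C. ball (fst i) (snd i)))"
    by (rule Vitali_covering_theorem_balls[of E K fst snd]) blast+
  show ?thesis
  proof (rule measure_le_if_disjoint_balls_cover[OF E c T(3) C(1) disj null])
    fix i
    assume "i \<in> C"
    with C(2) have "i \<in> K"
      by blast
    then show "ball (fst i) (snd i) \<subseteq> T \<and> c * ?\<mu> (ball (fst i) (snd i)) \<le> ?\<mu> (ball (fst i) (snd i) - E)"
      by (cases i) (simp add: K_def)
  qed
qed

lemma negligible_if_density_gaps:
  fixes E :: "'a::euclidean_space set"
  assumes E: "E \<in> lmeasurable" and c: "c > 0"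
    and gaps: "\<And>x d. x \<in> E \<Longrightarrow> d > 0 \<Longrightarrow>
        \<exists>r. 0 < r \<and> r < d \<and> c * measure lebesgue (ball x r) \<le> measure lebesgue (ball x r - E)"
  shows "negligible E"
proof -
  have "c * measure lebesgue E \<le> e" if "e > 0" for e
  proof -
    obtain T where T: "open T" "E \<subseteq> T" "T - E \<in> lmeasurable" "emeasure lebesgue (T - E) < e"
      using sets_lebesgue_outer_open[of E e] E \<open>e > 0\<close> fmeasurableD by blast
    then have "measure lebesgue (T - E) < e"
      by (simp add: emeasure_eq_measure2 ennreal_less_iff)
    with measure_le_if_density_gaps[OF E T(1-3) c gaps] show ?thesis
      by linarith
  qed
  then have "measure lebesgue E \<le> 0"
    using c by (metis field_le_epsilon add_0 mult_le_0_iff measure_nonneg not_le zero_less_mult_iff)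
  then show ?thesis
    using E negligible_iff_measure0 measure_nonneg by (metis order_antisym)
qed

section \<open>Block counts and bounded discrepancy\<close>

lemma block_count_Suc:
  "block_count a b (Suc m) = block_count a b m + (if map a [m..<m + length b] = b then 1 else 0)"
proof -
  have "{j. j < Suc m \<and> map a [j..<j + length b] = b} =
      {j. j < m \<and> map a [j..<j + length b] = b} \<union> (if map a [m..<m + length b] = b then {m} else {})"
    by (auto simp: less_Suc_eq)
  then show ?thesis
    by (auto simp: block_count_def card_insert_if)
qed

lemma block_count_le: "block_count a b m \<le> m"
  using card_mono[of "{..<m}" "{j. j < m \<and> map a [j..<j + length b] = b}"]
  by (auto simp: block_count_def)

lemma block_count_add:
  "block_count a b (j + n) = block_count a b j + block_count (\<lambda>t. a (j + t)) b n"
proof (induction n)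
  case (Suc n)
  have "map a [j + n..<j + n + length b] = map (\<lambda>t. a (j + t)) [n..<n + length b]"
    by (rule nth_equalityI) (auto simp: add.assoc)
  with Suc show ?case
    by (simp add: block_count_Suc)
qed (simp add: block_count_def)

definition bounded_discrepancy :: "nat \<Rightarrow> (nat \<Rightarrow> 'i::finite) \<Rightarrow> bool" where
  "bounded_discrepancy k a \<longleftrightarrow> (\<forall>b::'i list. length b = k \<longrightarrow>
      (\<exists>C. \<forall>m. \<bar>real (block_count a b m) - real m / real CARD('i) ^ k\<bar> \<le> C))"

lemma simply_normal_if_bounded_discrepancy:
  assumes "bounded_discrepancy k (a :: nat \<Rightarrow> 'i::finite)"
  shows "simply_normal k a"
  unfolding simply_normal_def
proof (intro allI impI)
  fix b :: "'i list"
  assume "length b = k"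
  then obtain C where C: "\<And>m. \<bar>real (block_count a b m) - real m / real CARD('i) ^ k\<bar> \<le> C"
    using assms unfolding bounded_discrepancy_def by blast
  let ?q = "real CARD('i) ^ k"
  have bound: "norm (real (block_count a b m) / real m - 1 / ?q) \<le> C * inverse (real m)"
    if "m \<ge> 1" for m
  proof -
    have "real (block_count a b m) / real m - 1 / ?q = (real (block_count a b m) - real m / ?q) / real m"
      using that by (simp add: field_simps)
    then have "norm (real (block_count a b m) / real m - 1 / ?q) =
        \<bar>real (block_count a b m) - real m / ?q\<bar> / real m"
      by simp
    also have "\<dots> \<le> C / real m"
      using C[of m] by (simp add: divide_right_mono)
    finally show ?thesis
      by (simp add: divide_inverse)
  qed
  have "(\<lambda>m. C * inverse (real m)) \<longlonglongrightarrow> 0"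
    by (intro tendsto_mult_right_zero lim_inverse_n)
  with eventually_sequentiallyI[of 1, OF bound]
  have "(\<lambda>m. real (block_count a b m) / real m - 1 / ?q) \<longlonglongrightarrow> 0"
    by (rule Lim_null_comparison)
  then show "(\<lambda>m. real (block_count a b m) / real m) \<longlonglongrightarrow> 1 / ?q"
    by (simp add: LIM_zero_iff)
qed

definition prepend :: "'i list \<Rightarrow> (nat \<Rightarrow> 'i) \<Rightarrow> nat \<Rightarrow> 'i" where
  "prepend u a j = (if j < length u then u ! j else a (j - length u))"

lemma block_count_discrepancy_le:
  fixes a :: "nat \<Rightarrow> 'i::finite"
  shows "\<bar>real (block_count a b m) - real m / real CARD('i) ^ k\<bar> \<le> real m"
proof -
  have "real m / real CARD('i) ^ k \<le> real m / 1"
    by (rule divide_left_mono) auto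
  moreover have "0 \<le> real m / real CARD('i) ^ k"
    by simp
  moreover have "real (block_count a b m) \<le> real m"
    using block_count_le[of a b m] by simp
  ultimately show ?thesis
    by (simp only: abs_le_iff) (intro conjI; linarith)
qed

lemma bounded_discrepancy_prepend:
  assumes "bounded_discrepancy k (a :: nat \<Rightarrow> 'i::finite)"
  shows "bounded_discrepancy k (prepend u a)"
  unfolding bounded_discrepancy_def
proof (intro allI impI)
  fix b :: "'i list"
  assume "length b = k"
  then obtain C where C: "\<And>m. \<bar>real (block_count a b m) - real m / real CARD('i) ^ k\<bar> \<le> C"
    using assms unfolding bounded_discrepancy_def by blast
  let ?l = "length u" and ?q = "real CARD('i) ^ k" and ?a = "prepend u a"
  have "\<bar>real (block_count ?a b m) - real m / ?q\<bar> \<le> real ?l + C" for m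
  proof (cases "m < ?l")
    case True
    have "0 \<le> C"
      using C[of 0] by (simp add: block_count_def)
    with True show ?thesis
      using block_count_discrepancy_le[of ?a b m k] by linarith
  next
    case False
    then obtain m' where m: "m = ?l + m'"
      by (metis le_add_diff_inverse not_less)
    have "(\<lambda>t. ?a (?l + t)) = a"
      by (simp add: prepend_def fun_eq_iff)
    then have "real (block_count ?a b m) - real m / ?q =
        (real (block_count ?a b ?l) - real ?l / ?q) + (real (block_count a b m') - real m' / ?q)"
      by (simp add: m block_count_add add_divide_distrib)
    then show ?thesis
      using block_count_discrepancy_le[of ?a b ?l k] C[of m'] by linarith
  qed
  then show "\<exists>C. \<forall>m. \<bar>real (block_count ?a b m) - real m / ?q\<bar> \<le> C"
    by blast
qed

lemma mem_affine_if_affine_combination: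
  fixes q :: "'c \<Rightarrow> 'a::real_vector" and w :: "'c \<Rightarrow> real"
  assumes A: "affine A" and y: "y \<in> A" and v: "v \<in> A"
    and I: "finite I" "c0 \<in> I"
    and comb: "y = s *\<^sub>R v + (\<Sum>c\<in>I. w c *\<^sub>R q c)" and sum1: "s + sum w I = 1"
    and w0: "w c0 \<noteq> 0" and others: "\<And>c. c \<in> I \<Longrightarrow> c \<noteq> c0 \<Longrightarrow> w c \<noteq> 0 \<Longrightarrow> q c \<in> A"
  shows "q c0 \<in> A"
proof -
  define T where "T = (\<lambda>x. x - y) ` A"
  have T: "subspace T"
    unfolding T_def using A y by (rule affine_diffs_subspace_subtract)
  have diff_T: "x - y \<in> T" if "x \<in> A" for x
    using that by (simp add: T_def)
  have "w c0 *\<^sub>R (q c0 - y) + ((\<Sum>c\<in>I - {c0}. w c *\<^sub>R (q c - y)) + s *\<^sub>R (v - y)) =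
      (\<Sum>c\<in>I. w c *\<^sub>R q c) + s *\<^sub>R v - (s + sum w I) *\<^sub>R y"
    using I by (simp add: sum.remove[of I c0] scaleR_diff_right sum_subtractf scaleR_sum_left algebra_simps)
  also have "\<dots> = 0"
    using comb sum1 by simp
  finally have "w c0 *\<^sub>R (q c0 - y) = - ((\<Sum>c\<in>I - {c0}. w c *\<^sub>R (q c - y)) + s *\<^sub>R (v - y))"
    by (simp only: eq_neg_iff_add_eq_0)
  moreover have "(\<Sum>c\<in>I - {c0}. w c *\<^sub>R (q c - y)) \<in> T"
    using others diff_T subspace_0[OF T] subspace_scale[OF T]
    by (intro subspace_sum[OF T]) (metis DiffE insertI1 scale_zero_left)
  then have "(\<Sum>c\<in>I - {c0}. w c *\<^sub>R (q c - y)) + s *\<^sub>R (v - y) \<in> T"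
    using diff_T[OF v] by (intro subspace_add[OF T] subspace_scale[OF T])
  ultimately have "w c0 *\<^sub>R (q c0 - y) \<in> T"
    using subspace_neg[OF T] by metis
  then have "(1 / w c0) *\<^sub>R (w c0 *\<^sub>R (q c0 - y)) \<in> T"
    by (rule subspace_scale[OF T])
  then have "q c0 - y \<in> T"
    using w0 by simp
  then show ?thesis
    by (auto simp: T_def)
qed

lemma ex_sum_le_card_mult:
  assumes "finite F" "F \<noteq> {}"
  obtains v0 where "v0 \<in> F" "sum u F \<le> real (card F) * u v0"
proof -
  have "Max (u ` F) \<in> u ` F"
    using assms by (intro Max_in) auto
  then obtain v0 where v0: "v0 \<in> F" "u v0 = Max (u ` F)"
    by (metis imageE)
  then have "u v \<le> u v0" if "v \<in> F" for v
    using assms(1) that by simp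
  then have "sum u F \<le> real (card F) * u v0"
    using sum_bounded_above[of F u "u v0"] by simp
  with v0(1) show ?thesis
    by (rule that)
qed

lemma convex_hull_homothetic_cover:
  fixes A :: "'a::euclidean_space set"
  assumes y: "y \<in> convex hull A" and t: "real DIM('a) / (real DIM('a) + 1) \<le> t"
  obtains v y' where "v \<in> A" "y' \<in> convex hull A" "y = t *\<^sub>R y' + (1 - t) *\<^sub>R v"
proof -
  obtain F where F: "finite F" "F \<subseteq> A" "card F \<le> DIM('a) + 1" "y \<in> convex hull F"
    using y caratheodory[of A] by blast
  then obtain u where u: "\<forall>v\<in>F. 0 \<le> u v" "sum u F = 1" "(\<Sum>v\<in>F. u v *\<^sub>R v) = y"
    by (auto simp: convex_hull_finite)
  then have "F \<noteq> {}"
    by auto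
  with F(1) obtain v0 where v0: "v0 \<in> F" "sum u F \<le> real (card F) * u v0"
    by (rule ex_sum_le_card_mult)
  have "0 < real DIM('a) / (real DIM('a) + 1)"
    by simp
  with t have t_pos: "0 < t"
    by linarith
  \<comment> \<open>The largest barycentric weight is at least the average \<open>1 / card F \<ge> 1 / (d + 1) \<ge> 1 - t\<close>.\<close>
  have "1 \<le> real (card F) * u v0"
    using v0(2) u(2) by simp
  also have "\<dots> \<le> (real DIM('a) + 1) * u v0"
    using F(3) u(1) v0(1) by (intro mult_right_mono) auto
  finally have "1 \<le> (real DIM('a) + 1) * u v0" .
  moreover have "real DIM('a) \<le> (real DIM('a) + 1) * t"
    using t by (simp add: field_simps)
  ultimately have "(real DIM('a) + 1) * 1 \<le> (real DIM('a) + 1) * (t + u v0)"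
    by (simp add: algebra_simps)
  then have "1 - t \<le> u v0"
    by (subst (asm) mult_le_cancel_left_pos) auto
  define u' where "u' v = (u v - (if v = v0 then 1 - t else 0)) / t" for v
  define y' where "y' = (\<Sum>v\<in>F. u' v *\<^sub>R v)"
  have "y' \<in> convex hull F"
    unfolding convex_hull_finite[OF F(1)]
  proof (intro CollectI exI conjI)
    show "\<forall>v\<in>F. 0 \<le> u' v"
      using u(1) \<open>1 - t \<le> u v0\<close> t_pos by (auto simp: u'_def)
    show "sum u' F = 1"
      using t_pos u(2) v0(1) F(1) by (simp add: u'_def sum_divide_distrib[symmetric] sum_subtractf)
  qed (simp add: y'_def)
  then have "y' \<in> convex hull A"
    using F(2) hull_mono by blast
  moreover have "t *\<^sub>R y' = y - (1 - t) *\<^sub>R v0"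
    using t_pos u(3) v0(1) F(1)
    by (simp add: y'_def u'_def scaleR_sum_right scaleR_diff_left sum_subtractf
        if_distrib[of "\<lambda>r. r *\<^sub>R _"] cong: if_cong)
  ultimately show ?thesis
    using that v0(1) F(2) by (metis add_diff_cancel diff_add_cancel subsetD)
qed

lemma backward_orbit:
  assumes "y \<in> Y" and step: "\<And>v. v \<in> Y \<Longrightarrow> \<exists>x v'. x \<in> X \<and> v' \<in> Y \<and> v = f x v'"
  shows "\<exists>xs ys. ys 0 = y \<and> (\<forall>n. xs n \<in> X \<and> ys n \<in> Y \<and> f (xs n) (ys (Suc n)) = ys n)"
proof -
  have "\<forall>v\<in>Y. \<exists>q. fst q \<in> X \<and> snd q \<in> Y \<and> v = f (fst q) (snd q)"
    using step by fastforce
  then obtain g where g: "\<And>v. v \<in> Y \<Longrightarrow> fst (g v) \<in> X \<and> snd (g v) \<in> Y \<and> v = f (fst (g v)) (snd (g v))"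
    by (metis bchoice)
  define ys where "ys = rec_nat y (\<lambda>_ v. snd (g v))"
  have ys_Y: "ys n \<in> Y" for n
    by (induction n) (use \<open>y \<in> Y\<close> g in \<open>auto simp: ys_def\<close>)
  then show ?thesis
    using g by (intro exI[of _ "\<lambda>n. fst (g (ys n))"] exI[of _ ys]) (auto simp: ys_def)
qed

lemma card_shift_mod:
  fixes c L :: nat
  assumes "c < L"
  shows "card {s. s < L \<and> P ((c + s) mod L)} = card {s. s < L \<and> P s}"
proof (rule bij_betw_same_card[OF bij_betw_byWitness[where f' = "\<lambda>s. (s + (L - c)) mod L"]])
  have left_inv: "((c + s) mod L + (L - c)) mod L = s" if "s < L" for s
  proof -
    have "((c + s) mod L + (L - c)) mod L = (c + s + (L - c)) mod L"
      by (simp add: mod_simps)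
    also have "c + s + (L - c) = s + L"
      using assms by simp
    finally show ?thesis
      using that by simp
  qed
  have right_inv: "(c + (s + (L - c)) mod L) mod L = s" if "s < L" for s
  proof -
    have "(c + (s + (L - c)) mod L) mod L = (c + (s + (L - c))) mod L"
      by (simp add: mod_simps)
    also have "c + (s + (L - c)) = s + L"
      using assms by simp
    finally show ?thesis
      using that by simp
  qed
  show "\<forall>s\<in>{s. s < L \<and> P ((c + s) mod L)}. ((c + s) mod L + (L - c)) mod L = s"
    using left_inv by blast
  show "\<forall>s\<in>{s. s < L \<and> P s}. (c + (s + (L - c)) mod L) mod L = s"
    using right_inv by blast
  show "(\<lambda>s. (c + s) mod L) ` {s. s < L \<and> P ((c + s) mod L)} \<subseteq> {s. s < L \<and> P s}"
    using assms by auto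
  show "(\<lambda>s. (s + (L - c)) mod L) ` {s. s < L \<and> P s} \<subseteq> {s. s < L \<and> P ((c + s) mod L)}"
    using assms right_inv by auto
qed

definition digit :: "nat \<Rightarrow> nat \<Rightarrow> nat \<Rightarrow> nat" where
  "digit B v e = v div B ^ e mod B"

lemma mod_power_eq_if_digits_eq:
  "(\<And>e. e < m \<Longrightarrow> digit B v e = digit B v' e) \<Longrightarrow> v mod B ^ m = v' mod B ^ m"
proof (induction m)
  case (Suc m)
  have "v mod B ^ Suc m = B ^ m * digit B v m + v mod B ^ m" for v
    unfolding power_Suc2 digit_def by (rule mod_mult2_eq)
  with Suc show ?case
    by simp
qed simp

lemma digit_div_power: "digit B (v div B ^ n) e = digit B v (n + e)"
  by (simp add: digit_def div_mult2_eq power_add)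

lemma eq_if_mod_and_succ_div_eq:
  fixes i i' M N :: nat
  assumes "i < N" "i' < N" "M dvd N"
    and "i mod M = i' mod M" and "(i + 1) mod N div M = (i' + 1) mod N div M"
  shows "i = i'"
proof -
  have "(i + 1) mod M = (i' + 1) mod M"
    using assms(4) by (metis mod_add_left_eq)
  then have "(i + 1) mod N mod M = (i' + 1) mod N mod M"
    using assms(3) by (simp add: mod_mod_cancel)
  then have "(i + 1) mod N = (i' + 1) mod N"
    using assms(5) by (metis div_mult_mod_eq)
  moreover have "(j + 1) mod N = (if j + 1 = N then 0 else j + 1)" if "j < N" for j
    using that by auto
  ultimately show ?thesis
    using assms(1,2) by (auto split: if_splits)
qed

section \<open>Iterated function systems of homotheties\<close>

locale homothety_ifs =
  fixes lam :: "real^'i::finite" and p :: "'i \<Rightarrow> 'a::euclidean_space"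
  assumes lam_pos: "\<And>i. 0 < lam $ i" and lam_lt1: "\<And>i. lam $ i < 1"
begin

abbreviation S where "S \<equiv> ifs_map lam p"

definition lam_max :: real where
  "lam_max = Max (range (\<lambda>i. lam $ i))"

definition p_bound :: real where
  "p_bound = Max (range (\<lambda>i. norm (p i)))"

definition word_ratio :: "'i list \<Rightarrow> real" where
  "word_ratio u = (\<Prod>i\<leftarrow>u. lam $ i)"

lemma lam_le_max: "lam $ i \<le> lam_max"
  unfolding lam_max_def by (rule Max_ge) auto

lemma lam_max_lt1: "lam_max < 1"
proof -
  have "lam_max \<in> range (\<lambda>i. lam $ i)"
    unfolding lam_max_def by (rule Max_in) auto
  then show ?thesis
    using lam_lt1 by auto
qed

lemma lam_max_pos: "0 < lam_max"
  using lam_pos[of undefined] lam_le_max[of undefined] by linarith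

lemma norm_p_le: "norm (p i) \<le> p_bound"
  unfolding p_bound_def by (rule Max_ge) auto

lemma p_bound_nonneg: "0 \<le> p_bound"
  using norm_ge_zero[of "p undefined"] norm_p_le[of undefined] by linarith

lemma S_apply: "S i y = lam $ i *\<^sub>R y + (1 - lam $ i) *\<^sub>R p i"
  by (simp add: ifs_map_def)

lemma word_ratio_Nil [simp]: "word_ratio [] = 1"
  and word_ratio_Cons [simp]: "word_ratio (i # u) = lam $ i * word_ratio u"
  and word_ratio_append: "word_ratio (u @ v) = word_ratio u * word_ratio v"
  by (simp_all add: word_ratio_def)

lemma word_ratio_pos: "0 < word_ratio u"
  by (induction u) (simp_all add: lam_pos)

lemma word_ratio_le_power: "word_ratio u \<le> lam_max ^ length u"
proof (induction u)
  case (Cons i u)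
  then show ?case
    using lam_le_max[of i] word_ratio_pos[of u] lam_pos[of i] by (simp add: mult_mono')
qed simp

lemma word_ratio_le1: "word_ratio u \<le> 1"
  using word_ratio_le_power[of u] lam_max_pos lam_max_lt1 by (meson less_imp_le order_trans power_le_one)

lemma word_ratio_lt1: "u \<noteq> [] \<Longrightarrow> word_ratio u < 1"
proof (cases u)
  case (Cons i v)
  have "lam $ i * word_ratio v \<le> lam $ i"
    using word_ratio_le1[of v] lam_pos[of i] by (simp add: mult_left_le)
  then show ?thesis
    using Cons lam_lt1[of i] by simp
qed simp

lemma foldr_S_affine: "foldr S u y = word_ratio u *\<^sub>R y + foldr S u 0"
  by (induction u) (simp_all add: S_apply algebra_simps)

lemma dist_foldr_S: "dist (foldr S u y) (foldr S u y') = word_ratio u * dist y y'"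
proof -
  have "foldr S u y - foldr S u y' = word_ratio u *\<^sub>R (y - y')"
    by (subst (1 2) foldr_S_affine) (simp add: algebra_simps)
  then show ?thesis
    using word_ratio_pos[of u] by (simp add: dist_norm)
qed

lemma norm_S_le: "norm y \<le> p_bound \<Longrightarrow> norm (S i y) \<le> p_bound"
proof -
  assume y: "norm y \<le> p_bound"
  have "norm (S i y) \<le> lam $ i * norm y + (1 - lam $ i) * norm (p i)"
    using norm_triangle_ineq[of "lam $ i *\<^sub>R y" "(1 - lam $ i) *\<^sub>R p i"] lam_pos[of i] lam_lt1[of i]
    by (simp add: S_apply)
  also have "\<dots> \<le> lam $ i * p_bound + (1 - lam $ i) * p_bound"
    using lam_pos[of i] lam_lt1[of i] y norm_p_le[of i] by (intro add_mono mult_left_mono) auto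
  finally show ?thesis
    by (simp add: algebra_simps)
qed

lemma norm_foldr_S_0: "norm (foldr S u 0) \<le> p_bound"
  by (induction u) (simp_all add: p_bound_nonneg norm_S_le)

lemma compose_eq_foldr: "compose S a j = foldr S (map a [0..<j])"
  by (induction j) (simp_all add: fun_eq_iff)

lemma foldr_S_prefix_0:
  "foldr S (map a [0..<j]) 0 = (\<Sum>t<j. word_ratio (map a [0..<t]) *\<^sub>R ((1 - lam $ a t) *\<^sub>R p (a t)))"
proof (induction j)
  case (Suc j)
  have "foldr S (map a [0..<Suc j]) 0 = foldr S (map a [0..<j]) (S (a j) 0)"
    by (simp add: foldr_append)
  also have "\<dots> = word_ratio (map a [0..<j]) *\<^sub>R S (a j) 0 + foldr S (map a [0..<j]) 0"
    by (rule foldr_S_affine)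
  also have "\<dots> = word_ratio (map a [0..<j]) *\<^sub>R ((1 - lam $ a j) *\<^sub>R p (a j)) + foldr S (map a [0..<j]) 0"
    by (simp add: S_apply)
  finally show ?case
    using Suc by (simp add: add.commute)
qed simp

lemma prefix_tendsto_coding: "(\<lambda>j. foldr S (map a [0..<j]) 0) \<longlonglongrightarrow> coding S a"
proof -
  let ?c = "\<lambda>t. word_ratio (map a [0..<t]) *\<^sub>R ((1 - lam $ a t) *\<^sub>R p (a t))"
  have bound: "norm (?c t) \<le> p_bound * lam_max ^ t" for t
  proof -
    have "norm (?c t) = word_ratio (map a [0..<t]) * ((1 - lam $ a t) * norm (p (a t)))"
      using word_ratio_pos[of "map a [0..<t]"] lam_lt1[of "a t"] by simp
    also have "\<dots> \<le> lam_max ^ t * (1 * p_bound)"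
      using word_ratio_le_power[of "map a [0..<t]"] word_ratio_pos[of "map a [0..<t]"]
        lam_pos[of "a t"] lam_lt1[of "a t"] norm_p_le[of "a t"] p_bound_nonneg
      by (intro mult_mono) auto
    finally show ?thesis
      by (simp add: mult.commute)
  qed
  have "summable (\<lambda>t. p_bound * lam_max ^ t)"
    using lam_max_pos lam_max_lt1 by (intro summable_mult summable_geometric) auto
  then have "summable ?c"
    using bound by (rule summable_comparison_test')
  then have lim: "(\<lambda>j. foldr S (map a [0..<j]) 0) \<longlonglongrightarrow> suminf ?c"
    unfolding foldr_S_prefix_0 by (rule summable_LIMSEQ)
  then have "coding S a = suminf ?c"
    unfolding coding_def compose_eq_foldr by (rule limI)
  with lim show ?thesis
    by simp
qed

lemma norm_coding_le: "norm (coding S a) \<le> p_bound"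
  by (rule Lim_norm_ubound[OF _ prefix_tendsto_coding]) (simp_all add: norm_foldr_S_0)

lemma coding_shift: "coding S a = foldr S (map a [0..<j]) (coding S (\<lambda>n. a (n + j)))"
proof -
  have split: "map a [0..<m + j] = map a [0..<j] @ map (\<lambda>n. a (n + j)) [0..<m]" for m
    by (rule nth_equalityI) (auto simp: nth_append)
  have "(\<lambda>m. foldr S (map a [0..<m + j]) 0) \<longlonglongrightarrow> coding S a"
    using LIMSEQ_ignore_initial_segment[OF prefix_tendsto_coding] .
  moreover have "(\<lambda>m. foldr S (map a [0..<m + j]) 0) \<longlonglongrightarrow> foldr S (map a [0..<j]) (coding S (\<lambda>n. a (n + j)))"
    unfolding split foldr_append comp_def
    by (subst (1 2) foldr_S_affine) (intro tendsto_intros prefix_tendsto_coding)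
  ultimately show ?thesis
    using LIMSEQ_unique by blast
qed

lemma coding_Suc: "coding S a = S (a 0) (coding S (\<lambda>n. a (Suc n)))"
  using coding_shift[of a 1] by simp

lemma dist_coding_prefix_image:
  "dist (coding S a) (foldr S (map a [0..<j]) y) \<le> word_ratio (map a [0..<j]) * (p_bound + norm y)"
proof -
  have "dist (coding S a) (foldr S (map a [0..<j]) y) =
      word_ratio (map a [0..<j]) * dist (coding S (\<lambda>n. a (n + j))) y"
    by (subst coding_shift[of a j]) (rule dist_foldr_S)
  also have "\<dots> \<le> word_ratio (map a [0..<j]) * (p_bound + norm y)"
    using word_ratio_pos[of "map a [0..<j]"] norm_triangle_ineq4[of "coding S (\<lambda>n. a (n + j))" y]
      norm_coding_le[of "\<lambda>n. a (n + j)"]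
    by (intro mult_left_mono) (auto simp: dist_norm)
  finally show ?thesis .
qed

lemma dist_prefix_coding:
  "dist (foldr S (map a [0..<j]) y) (coding S a) \<le> lam_max ^ j * (norm y + p_bound)"
proof -
  have "dist (foldr S (map a [0..<j]) y) (coding S a) = dist (coding S a) (foldr S (map a [0..<j]) y)"
    by (rule dist_commute)
  also have "\<dots> \<le> word_ratio (map a [0..<j]) * (p_bound + norm y)"
    by (rule dist_coding_prefix_image)
  also have "\<dots> \<le> lam_max ^ j * (p_bound + norm y)"
    using word_ratio_le_power[of "map a [0..<j]"] p_bound_nonneg by (intro mult_right_mono) auto
  finally show ?thesis
    by (simp add: add.commute)
qed

lemma lam_max_power_tendsto_0: "(\<lambda>j. lam_max ^ j * C) \<longlonglongrightarrow> 0"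
  using lam_max_pos lam_max_lt1 by (intro tendsto_mult_left_zero LIMSEQ_power_zero) auto

lemma prefix_tendsto_coding_from: "(\<lambda>j. foldr S (map a [0..<j]) y) \<longlonglongrightarrow> coding S a"
proof -
  have "(\<lambda>j. dist (foldr S (map a [0..<j]) y) (coding S a)) \<longlonglongrightarrow> 0"
  proof (rule Lim_null_comparison)
    show "\<forall>\<^sub>F j in sequentially. norm (dist (foldr S (map a [0..<j]) y) (coding S a))
        \<le> lam_max ^ j * (norm y + p_bound)"
      using dist_prefix_coding by simp
  qed (rule lam_max_power_tendsto_0)
  then show ?thesis
    by (rule tendsto_dist_iff[THEN iffD2])
qed

lemma coding_eq_if_bounded_tails:
  assumes "\<And>m. norm (ys m) \<le> C" and "\<And>m. y = foldr S (map a [0..<g m]) (ys m)" and "\<And>m. m \<le> g m"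
  shows "y = coding S a"
proof -
  have "dist y (coding S a) \<le> lam_max ^ m * (C + p_bound)" for m
  proof -
    have "dist y (coding S a) \<le> lam_max ^ g m * (norm (ys m) + p_bound)"
      using dist_prefix_coding[of a "g m" "ys m"] assms(2)[of m] by simp
    also have "\<dots> \<le> lam_max ^ m * (C + p_bound)"
      using assms(1,3) lam_max_pos lam_max_lt1 p_bound_nonneg norm_ge_zero[of "ys m"]
      by (intro mult_mono power_decreasing) auto
    finally show ?thesis .
  qed
  then have "dist y (coding S a) \<le> 0"
    by (intro LIMSEQ_le_const[OF lam_max_power_tendsto_0]) auto
  then show ?thesis
    by simp
qed

lemma range_coding_eq_Union: "range (coding S) = (\<Union>i. S i ` range (coding S))"
proof
  show "range (coding S) \<subseteq> (\<Union>i. S i ` range (coding S))"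
    using coding_Suc by blast
  have "S i (coding S b) = coding S (case_nat i b)" for i b
    using coding_Suc[of "case_nat i b"] by simp
  then show "(\<Union>i. S i ` range (coding S)) \<subseteq> range (coding S)"
    by auto
qed

lemma range_coding_subset_if_invariant:
  assumes "closed Y" "Y \<noteq> {}" "\<And>i. S i ` Y \<subseteq> Y"
  shows "range (coding S) \<subseteq> Y"
proof
  fix x
  assume "x \<in> range (coding S)"
  then obtain a where x: "x = coding S a"
    by auto
  obtain y where y: "y \<in> Y"
    using assms(2) by auto
  have "foldr S u y \<in> Y" for u
    by (induction u) (use y assms(3) in auto)
  then show "x \<in> Y"
    unfolding x using closed_sequentially[OF assms(1) _ prefix_tendsto_coding_from] by blast
qed

lemma subset_range_coding_if_self_covering:
  assumes "bounded Y" and cover: "Y \<subseteq> (\<Union>i. S i ` Y)"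
  shows "Y \<subseteq> range (coding S)"
proof
  fix y
  assume "y \<in> Y"
  have "\<exists>a ys. ys 0 = y \<and> (\<forall>n. a n \<in> UNIV \<and> ys n \<in> Y \<and> S (a n) (ys (Suc n)) = ys n)"
    by (rule backward_orbit) (use \<open>y \<in> Y\<close> cover in blast)+
  then obtain a ys where ys0: "ys 0 = y" and ys: "\<forall>n. a n \<in> UNIV \<and> ys n \<in> Y \<and> S (a n) (ys (Suc n)) = ys n"
    by blast
  have "y = foldr S (map a [0..<m]) (ys m)" for m
  proof (induction m)
    case (Suc m)
    then show ?case
      using ys by (simp del: upt_Suc add: upt_Suc_append foldr_append)
  qed (simp add: ys0)
  moreover obtain C where "\<And>m. norm (ys m) \<le> C"
    using assms(1) ys bounded_iff by metis
  ultimately have "y = coding S a"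
    by (intro coding_eq_if_bounded_tails[of ys C y a id]) auto
  then show "y \<in> range (coding S)"
    by simp
qed

lemma compact_range_coding: "compact (range (coding S))"
proof -
  let ?R = "range (coding S)"
  have bounded: "bounded ?R"
    using norm_coding_le unfolding bounded_iff by blast
  have "compact (S i ` closure ?R)" for i
    using bounded unfolding S_apply by (intro compact_continuous_image continuous_intros) (simp add: compact_closure)
  then have "closed (\<Union>i. S i ` closure ?R)"
    by (intro closed_UN) (auto simp: compact_imp_closed)
  moreover have "?R \<subseteq> (\<Union>i. S i ` closure ?R)"
  proof -
    have "?R = (\<Union>i. S i ` ?R)"
      by (rule range_coding_eq_Union)
    also have "\<dots> \<subseteq> (\<Union>i. S i ` closure ?R)"
      by (intro UN_mono image_mono closure_subset) auto
    finally show ?thesis .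
  qed
  ultimately have "closure ?R \<subseteq> (\<Union>i. S i ` closure ?R)"
    by (rule closure_minimal[rotated])
  then have "closure ?R \<subseteq> ?R"
    using bounded by (intro subset_range_coding_if_self_covering) auto
  then have "closed ?R"
    by (simp add: closure_subset_eq)
  with bounded show ?thesis
    by (simp add: compact_eq_bounded_closed)
qed

lemma attractor_eq_range_coding: "attractor S = range (coding S)"
  unfolding attractor_def
proof (rule the_equality)
  show "compact (range (coding S)) \<and> range (coding S) \<noteq> {} \<and> range (coding S) = (\<Union>i. S i ` range (coding S))"
    using compact_range_coding range_coding_eq_Union by blast
  fix X
  assume X: "compact X \<and> X \<noteq> {} \<and> X = (\<Union>i. S i ` X)"
  then have "range (coding S) \<subseteq> X"
    by (intro range_coding_subset_if_invariant) (auto simp: compact_imp_closed)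
  moreover have "X \<subseteq> range (coding S)"
    using X by (intro subset_range_coding_if_self_covering) (auto simp: compact_imp_bounded)
  ultimately show "X = range (coding S)"
    by blast
qed

lemma coding_prepend: "coding S (prepend u a) = foldr S u (coding S a)"
proof -
  have "map (prepend u a) [0..<length u] = u"
    by (rule nth_equalityI) (auto simp: prepend_def)
  moreover have "(\<lambda>n. prepend u a (n + length u)) = a"
    by (simp add: prepend_def fun_eq_iff)
  ultimately show ?thesis
    using coding_shift[of "prepend u a" "length u"] by simp
qed


text \<open>The fixed point of \<open>foldr S u\<close> for \<open>u \<noteq> []\<close> (junk for \<open>u = []\<close>, where the division is by zero).\<close>

definition fixpoint :: "'i list \<Rightarrow> 'a" where
  "fixpoint u = (1 / (1 - word_ratio u)) *\<^sub>R foldr S u 0"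

lemma foldr_S_fixpoint:
  assumes "u \<noteq> []"
  shows "foldr S u y = word_ratio u *\<^sub>R y + (1 - word_ratio u) *\<^sub>R fixpoint u"
  using word_ratio_lt1[OF assms] by (subst foldr_S_affine) (simp add: fixpoint_def)

lemma fixpoint_fixed: "u \<noteq> [] \<Longrightarrow> foldr S u (fixpoint u) = fixpoint u"
  by (simp add: foldr_S_fixpoint scaleR_diff_left)

lemma fixpoint_unique:
  assumes "u \<noteq> []" "foldr S u y = y"
  shows "y = fixpoint u"
proof -
  have eq: "y = word_ratio u *\<^sub>R y + (1 - word_ratio u) *\<^sub>R fixpoint u"
    using foldr_S_fixpoint[OF assms(1), of y] unfolding assms(2) .
  have "(1 - word_ratio u) *\<^sub>R (y - fixpoint u) = y - (word_ratio u *\<^sub>R y + (1 - word_ratio u) *\<^sub>R fixpoint u)"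
    by (simp add: algebra_simps)
  also have "\<dots> = 0"
    by (simp only: eq[symmetric] diff_self)
  finally show ?thesis
    using word_ratio_lt1[OF assms(1)] by simp
qed

lemma fixpoint_append:
  assumes "v @ w \<noteq> []"
  shows "fixpoint (v @ w) = foldr S v (fixpoint (w @ v))"
proof -
  have "w @ v \<noteq> []"
    using assms by auto
  then have "foldr S (v @ w) (foldr S v (fixpoint (w @ v))) = foldr S v (fixpoint (w @ v))"
    using fixpoint_fixed[of "w @ v"] by simp
  then show ?thesis
    using fixpoint_unique[OF assms] by metis
qed

fun weight :: "'i list \<Rightarrow> 'i \<Rightarrow> real" where
  "weight [] c = 0"
| "weight (i # u) c = lam $ i * weight u c + (if c = i then 1 - lam $ i else 0)"

lemma foldr_S_weights: "foldr S u y = word_ratio u *\<^sub>R y + (\<Sum>c\<in>UNIV. weight u c *\<^sub>R p c)"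
proof (induction u)
  case (Cons i u)
  have "(\<Sum>c\<in>UNIV. weight (i # u) c *\<^sub>R p c) =
      lam $ i *\<^sub>R (\<Sum>c\<in>UNIV. weight u c *\<^sub>R p c) + (1 - lam $ i) *\<^sub>R p i"
    by (simp add: scaleR_add_left sum.distrib scaleR_sum_right if_distrib[of "\<lambda>x. x *\<^sub>R _"] cong: if_cong)
  with Cons show ?case
    by (simp add: S_apply algebra_simps)
qed simp

lemma word_ratio_plus_weights: "word_ratio u + (\<Sum>c\<in>UNIV. weight u c) = 1"
proof (induction u)
  case (Cons i u)
  have "(\<Sum>c\<in>UNIV. weight (i # u) c) = lam $ i * (\<Sum>c\<in>UNIV. weight u c) + (1 - lam $ i)"
    by (simp add: sum.distrib sum_distrib_left)
  then have "word_ratio (i # u) + (\<Sum>c\<in>UNIV. weight (i # u) c) =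
      lam $ i * (word_ratio u + (\<Sum>c\<in>UNIV. weight u c)) + (1 - lam $ i)"
    by (simp only: word_ratio_Cons algebra_simps)
  with Cons show ?case
    by simp
qed simp

lemma weight_nonneg: "0 \<le> weight u c"
  by (induction u) (use lam_pos lam_lt1 in \<open>auto simp: less_imp_le\<close>)

lemma weight_pos: "c \<in> set u \<Longrightarrow> 0 < weight u c"
proof (induction u)
  case (Cons i u)
  then show ?case
    using lam_pos[of i] lam_lt1[of i] weight_nonneg[of u c]
    by (cases "c = i") (auto simp: add_nonneg_pos)
qed simp

lemma weight_eq_0: "c \<notin> set u \<Longrightarrow> weight u c = 0"
  by (induction u) auto

lemma foldr_S_image: "foldr S u ` A = (\<lambda>v. foldr S u 0 + word_ratio u *\<^sub>R v) ` A"
  by (metis foldr_S_affine add.commute)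

lemma open_foldr_S_image: "open A \<Longrightarrow> open (foldr S u ` A)"
  unfolding foldr_S_image using word_ratio_pos[of u] by (intro open_affinity) auto

lemma measure_foldr_S_image:
  "measure lebesgue (foldr S u ` A) = word_ratio u ^ DIM('a) * measure lebesgue A"
  unfolding foldr_S_image add.commute[of "foldr S u 0"]
  using measure_lebesgue_affine[of "word_ratio u" "foldr S u 0" A] word_ratio_pos[of u] by simp

end

section \<open>The word of all k-digit numerals\<close>

locale numeral_word =
  fixes e :: "nat \<Rightarrow> 'i::finite" and k B :: nat
  assumes card_eq: "CARD('i) = B" and e_bij: "bij_betw e {..<B} UNIV" and k_pos: "1 \<le> k" and B_ge2: "2 \<le> B"
begin

definition N :: nat where "N = B ^ k"

definition L :: nat where "L = k * N"

definition numeral_digit :: "nat \<Rightarrow> nat \<Rightarrow> nat" where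
  "numeral_digit i t = digit B i (k - 1 - t)"

text \<open>\<open>letter 0, ..., letter (L - 1)\<close> spells the numerals \<open>0, ..., N - 1\<close> in base \<open>B\<close> with \<open>k\<close> digits
  each, most significant digit first, the digit \<open>d\<close> being written as \<open>e d\<close>; beyond that \<open>letter\<close>
  is \<open>L\<close>-periodic, so \<open>cycle_word s\<close> is the rotation of this word starting at \<open>s\<close>.\<close>

definition letter :: "nat \<Rightarrow> 'i" where
  "letter s = e (numeral_digit (s div k mod N) (s mod k))"

definition cycle_word :: "nat \<Rightarrow> 'i list" where
  "cycle_word s = map letter [s..<s + L]"

definition window :: "nat \<Rightarrow> 'i list" where
  "window s = map letter [s..<s + k]"

definition block_sequence :: "(nat \<Rightarrow> nat) \<Rightarrow> nat \<Rightarrow> 'i" where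
  "block_sequence xs j = letter (k * xs (j div L) + j mod L)"

lemma B_le_N: "B \<le> N"
  unfolding N_def using power_increasing[of 1 k B] k_pos B_ge2 by simp

lemma k_lt_L: "k < L"
proof -
  have "k * 2 \<le> k * N"
    using B_le_N B_ge2 by simp
  then show ?thesis
    unfolding L_def using k_pos by simp
qed

lemma e_inj: "x < B \<Longrightarrow> y < B \<Longrightarrow> e x = e y \<Longrightarrow> x = y"
  using e_bij unfolding bij_betw_def inj_on_def by blast

lemma e_surj: "\<exists>x<B. c = e x"
  using e_bij unfolding bij_betw_def by (metis UNIV_I imageE lessThan_iff)

lemma numeral_digit_lt: "numeral_digit i t < B"
  using B_ge2 by (simp add: numeral_digit_def digit_def)

lemma numeral_digit_single:
  assumes "x < B" "t < k"
  shows "numeral_digit x t = (if t = k - 1 then x else 0)"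
proof (cases "t = k - 1")
  case False
  then have "B ^ 1 \<le> B ^ (k - 1 - t)"
    using assms B_ge2 by (intro power_increasing) auto
  with assms False show ?thesis
    by (simp add: numeral_digit_def digit_def)
qed (use assms in \<open>simp add: numeral_digit_def digit_def\<close>)

lemma letter_block: "u < k \<Longrightarrow> letter (k * j + u) = e (numeral_digit (j mod N) u)"
  by (simp add: letter_def)

lemma letter_leading_zero: "x < B \<Longrightarrow> u < k - 1 \<Longrightarrow> letter (k * x + u) = e 0"
  using letter_block[of u x] numeral_digit_single[of x u] B_le_N by simp

lemma letter_last: "x < B \<Longrightarrow> letter (k * x + (k - 1)) = e x"
  using letter_block[of "k - 1" x] numeral_digit_single[of x "k - 1"] B_le_N k_pos by simp

lemma letter_add_L: "letter (s + L) = letter s"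
proof -
  have "(s + L) div k = s div k + N" "(s + L) mod k = s mod k"
    using k_pos by (simp_all add: L_def)
  then show ?thesis
    by (simp add: letter_def)
qed

lemma letter_mod_L: "letter (s mod L) = letter s"
proof -
  have "letter (x + L * n) = letter x" for x n
  proof (induction n)
    case (Suc n)
    have "x + L * Suc n = (x + L * n) + L"
      by simp
    with Suc show ?case
      by (simp only: letter_add_L)
  qed simp
  then show ?thesis
    by (metis mod_mult_div_eq)
qed

lemma window_mod_L: "window (s mod L) = window s"
proof -
  have "letter (s mod L + q) = letter (s + q)" for q
    using letter_mod_L[of "s mod L + q"] letter_mod_L[of "s + q"] by (simp add: mod_simps)
  then show ?thesis
    unfolding window_def by (intro nth_equalityI) simp_all
qed

lemma numeral_eq_if_digits_eq:
  assumes i: "i < N" "i' < N" and t: "t < k"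
    and low: "\<And>u. t \<le> u \<Longrightarrow> u < k \<Longrightarrow> numeral_digit i u = numeral_digit i' u"
    and high: "\<And>u. u < t \<Longrightarrow> numeral_digit ((i + 1) mod N) u = numeral_digit ((i' + 1) mod N) u"
  shows "i = i'"
proof -
  have "i mod B ^ (k - t) = i' mod B ^ (k - t)"
  proof (rule mod_power_eq_if_digits_eq)
    fix f
    assume "f < k - t"
    then show "digit B i f = digit B i' f"
      using low[of "k - 1 - f"] by (simp add: numeral_digit_def)
  qed
  moreover have "(i + 1) mod N div B ^ (k - t) = (i' + 1) mod N div B ^ (k - t)"
  proof -
    have lt: "v div B ^ (k - t) < B ^ t" if "v < N" for v
      using that t by (simp add: N_def less_mult_imp_div_less power_add[symmetric])
    have "(i + 1) mod N div B ^ (k - t) mod B ^ t = (i' + 1) mod N div B ^ (k - t) mod B ^ t"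
    proof (rule mod_power_eq_if_digits_eq)
      fix f
      assume "f < t"
      then show "digit B ((i + 1) mod N div B ^ (k - t)) f = digit B ((i' + 1) mod N div B ^ (k - t)) f"
        using high[of "t - 1 - f"] t by (simp add: digit_div_power numeral_digit_def)
    qed
    moreover have "(i + 1) mod N < N" "(i' + 1) mod N < N"
      using i by simp_all
    ultimately show ?thesis
      using lt by simp
  qed
  ultimately show ?thesis
    using i t by (intro eq_if_mod_and_succ_div_eq[of i N i' "B ^ (k - t)"]) (simp_all add: N_def le_imp_power_dvd)
qed

lemma window_inj:
  assumes s: "s < L" "s' < L" and t: "s mod k = s' mod k" and w: "window s = window s'"
  shows "s = s'"
proof -
  define i i' t where "i = s div k" and "i' = s' div k" and "t = s mod k"
  have i: "i < N" "i' < N" "t < k"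
    using s k_pos by (auto simp: i_def i'_def t_def L_def less_mult_imp_div_less mult.commute)
  have s_eq: "s = k * i + t" "s' = k * i' + t"
    by (simp add: i_def t_def) (use t in \<open>simp add: i'_def t_def\<close>)
  have same_letter: "letter (s + q) = letter (s' + q)" if "q < k" for q
    using arg_cong[OF w, of "\<lambda>b. b ! q"] that by (simp add: window_def)
  have same_digit: "numeral_digit (j mod N) u = numeral_digit (j' mod N) u"
    if "e (numeral_digit (j mod N) u) = e (numeral_digit (j' mod N) u)" for j j' u
    using that e_inj numeral_digit_lt by blast
  \<comment> \<open>The window at \<open>k i + t\<close> shows the last \<open>k - t\<close> digits of \<open>i\<close> and the first \<open>t\<close> digits of \<open>i + 1\<close>.\<close>
  have "i = i'"
  proof (rule numeral_eq_if_digits_eq[OF i])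
    show "numeral_digit i u = numeral_digit i' u" if "t \<le> u" "u < k" for u
      using same_letter[of "u - t"] that i same_digit[of i u i'] by (simp add: s_eq letter_block)
    show "numeral_digit ((i + 1) mod N) u = numeral_digit ((i' + 1) mod N) u" if "u < t" for u
    proof -
      have "k - t + u < k"
        using that i(3) by linarith
      then have "letter (s + (k - t + u)) = letter (s' + (k - t + u))"
        by (rule same_letter)
      moreover have "s + (k - t + u) = k * (i + 1) + u" "s' + (k - t + u) = k * (i' + 1) + u"
        using that i(3) s_eq by (simp_all add: algebra_simps)
      ultimately have "letter (k * (i + 1) + u) = letter (k * (i' + 1) + u)"
        by simp
      moreover have "u < k"
        using that i(3) by simp
      ultimately show ?thesis
        using letter_block[of u "i + 1"] letter_block[of u "i' + 1"] same_digit[of "i + 1" u "i' + 1"] by metis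
    qed
  qed
  then show ?thesis
    by (simp add: s_eq)
qed

lemma card_lists_length: "card {b :: 'i list. length b = n} = B ^ n"
  using card_lists_length_eq[of "UNIV :: 'i set" n] card_eq by simp

lemma card_window_eq:
  assumes b: "length b = k"
  shows "card {s. s < L \<and> window s = b} = k"
proof -
  define \<phi> where "\<phi> s = (s mod k, window s)" for s
  have inj: "inj_on \<phi> {..<L}"
    by (rule inj_onI) (use window_inj in \<open>auto simp: \<phi>_def\<close>)
  have "\<phi> ` {..<L} \<subseteq> {..<k} \<times> {b. length b = k}"
    using k_pos by (auto simp: \<phi>_def window_def)
  moreover have "card (\<phi> ` {..<L}) = card ({..<k} \<times> {b :: 'i list. length b = k})"
    using card_image[OF inj] by (simp add: card_cartesian_product card_lists_length L_def N_def)
  ultimately have img: "\<phi> ` {..<L} = {..<k} \<times> {b. length b = k}"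
    using finite_lists_length_eq[of "UNIV :: 'i set" k] by (intro card_subset_eq) auto
  have "{..<k} \<times> {b} \<subseteq> \<phi> ` {..<L}"
    unfolding img using b by blast
  then have "\<phi> ` {s. s < L \<and> window s = b} = {..<k} \<times> {b}"
    using k_pos by (auto simp: \<phi>_def)
  moreover have "inj_on \<phi> {s. s < L \<and> window s = b}"
    using inj by (rule inj_on_subset) auto
  ultimately have "card {s. s < L \<and> window s = b} = card ({..<k} \<times> {b})"
    by (metis card_image)
  then show ?thesis
    by (simp add: card_cartesian_product)
qed

lemma card_letter_eq: "card {s. s < L \<and> letter s = c} = k * B ^ (k - 1)"
proof -
  define Lc where "Lc = {b :: 'i list. length b = k \<and> b ! 0 = c}"
  have letter_window: "letter s = window s ! 0" for s
    using k_pos by (simp add: window_def)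
  have "{s. s < L \<and> letter s = c} = (\<Union>b\<in>Lc. {s. s < L \<and> window s = b})"
    by (auto simp: Lc_def letter_window window_def)
  moreover have "finite Lc"
    using finite_lists_length_eq[of "UNIV :: 'i set" k] by (simp add: Lc_def)
  ultimately have "card {s. s < L \<and> letter s = c} = (\<Sum>b\<in>Lc. card {s. s < L \<and> window s = b})"
    by (simp only:) (rule card_UN_disjoint; auto)
  also have "\<dots> = k * card Lc"
    by (simp add: Lc_def card_window_eq)
  also have "Lc = (\<lambda>b. c # b) ` {b. length b = k - 1}"
  proof (intro set_eqI iffI)
    fix b
    assume "b \<in> Lc"
    then have "length b = Suc (k - 1)" "b ! 0 = c"
      using k_pos by (auto simp: Lc_def)
    then show "b \<in> (\<lambda>b. c # b) ` {b. length b = k - 1}"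
      by (cases b) auto
  qed (use k_pos in \<open>auto simp: Lc_def\<close>)
  finally show ?thesis
    by (simp add: card_image card_lists_length)
qed

lemma prod_letters: "(\<Prod>s<L. f (letter s)) = (\<Prod>c\<in>UNIV. f c ^ (k * B ^ (k - 1)))"
proof -
  have "(\<Prod>s<L. f (letter s)) = (\<Prod>c\<in>UNIV. \<Prod>s\<in>{s \<in> {..<L}. letter s = c}. f (letter s))"
    by (rule prod.group[symmetric]) auto
  also have "\<dots> = (\<Prod>c\<in>UNIV. f c ^ card {s. s < L \<and> letter s = c})"
    by (rule prod.cong) auto
  finally show ?thesis
    by (simp add: card_letter_eq)
qed

lemma cycle_word_shift:
  assumes "j \<le> L"
  shows "cycle_word (s + j) = drop j (cycle_word s) @ take j (cycle_word s)"
proof (rule nth_equalityI)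
  fix n
  assume "n < length (cycle_word (s + j))"
  then have "n < L"
    by (simp add: cycle_word_def)
  show "cycle_word (s + j) ! n = (drop j (cycle_word s) @ take j (cycle_word s)) ! n"
  proof (cases "n < L - j")
    case False
    then have "s + j + n = (s + (n + j) - L) + L"
      using assms by simp
    then have "letter (s + j + n) = letter (s + (n + j) - L)"
      by (simp only: letter_add_L)
    with False \<open>n < L\<close> assms show ?thesis
      by (simp add: cycle_word_def nth_append)
  qed (use assms in \<open>simp add: cycle_word_def nth_append add.assoc\<close>)
qed (simp add: cycle_word_def)

lemma take_cycle_word:
  assumes "x < B"
  shows "take k (cycle_word (k * x)) = replicate (k - 1) (e 0) @ [e x]"
proof (rule nth_equalityI)
  show "length (take k (cycle_word (k * x))) = length (replicate (k - 1) (e 0) @ [e x])"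
    using k_lt_L k_pos by (simp add: cycle_word_def)
  fix t
  assume "t < length (take k (cycle_word (k * x)))"
  then have t: "t < k"
    by (simp add: cycle_word_def)
  then have "take k (cycle_word (k * x)) ! t = letter (k * x + t)"
    using k_lt_L by (simp add: cycle_word_def)
  moreover have "letter (k * x + t) = (if t < k - 1 then e 0 else e x)"
    using letter_leading_zero[OF assms] letter_last[OF assms] t by (cases "t = k - 1") auto
  ultimately show "take k (cycle_word (k * x)) ! t = (replicate (k - 1) (e 0) @ [e x]) ! t"
    using t by (simp add: nth_append)
qed

lemma block_sequence_window:
  assumes xs: "\<And>m. xs m < B"
  shows "map (block_sequence xs) [j..<j + k] = window (k * xs (j div L) + j mod L)"
proof -
  have L_pos: "0 < L"
    using k_lt_L by simp
  obtain a r where j: "j = L * a + r" "r < L"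
    using L_pos div_mult_mod_eq[of j L] by (metis mod_less_divisor mult.commute)
  then have [simp]: "j div L = a" "j mod L = r"
    by simp_all
  \<comment> \<open>A window crossing into the next block only reads its leading zeros, which the cyclic word shows too.\<close>
  have "block_sequence xs (j + q) = letter (k * xs a + r + q)" if "q < k" for q
  proof (cases "r + q < L")
    case True
    with j show ?thesis
      by (simp add: block_sequence_def add.assoc)
  next
    case False
    define u where "u = r + q - L"
    define a' where "a' = a + 1"
    have u: "u < k - 1" "j + q = L * a' + u"
      using False j that by (auto simp: u_def a'_def)
    have "u < L" "L \<noteq> 0"
      using u(1) k_lt_L by simp_all
    then have "(j + q) div L = a'" "(j + q) mod L = u"
      unfolding u(2) by simp_all
    then have "block_sequence xs (j + q) = e 0"
      using xs u(1) letter_leading_zero by (simp add: block_sequence_def)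
    moreover have "letter (k * xs a + r + q) = e 0"
    proof -
      have "k * xs a + r + q = (k * xs a + u) + L"
        using False by (simp add: u_def)
      then have "letter (k * xs a + r + q) = letter (k * xs a + u)"
        by (simp only: letter_add_L)
      then show ?thesis
        using letter_leading_zero[OF xs u(1)] by simp
    qed
    ultimately show ?thesis
      by simp
  qed
  then show ?thesis
    by (intro nth_equalityI) (simp_all add: window_def add.assoc)
qed

lemma block_sequence_prefix:
  "map (block_sequence xs) [0..<m * L + L] = map (block_sequence xs) [0..<m * L] @ cycle_word (k * xs m)"
proof -
  have "block_sequence xs (m * L + n) = letter (k * xs m + n)" if "n < L" for n
    using that by (simp add: block_sequence_def)
  then have "map (block_sequence xs) [m * L..<m * L + L] = cycle_word (k * xs m)"
    by (intro nth_equalityI) (simp_all add: cycle_word_def)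
  then show ?thesis
    by (simp add: upt_add_eq_append[of 0 "m * L" L])
qed

lemma block_count_block_sequence:
  assumes xs: "\<And>m. xs m < B" and b: "length b = k"
  shows "block_count (block_sequence xs) b (m * L) = m * k"
proof (induction m)
  case (Suc m)
  let ?c = "k * xs m"
  have c: "?c < L"
    using xs[of m] k_pos by (simp add: L_def) (meson B_le_N less_le_trans)
  have "map (\<lambda>t. block_sequence xs (m * L + t)) [s..<s + k] = window ((?c + s) mod L)" if "s < L" for s
  proof -
    have "map (\<lambda>t. block_sequence xs (m * L + t)) [s..<s + k] = map (block_sequence xs) [m * L + s..<m * L + s + k]"
      by (intro nth_equalityI) (simp_all add: add.assoc)
    also have "\<dots> = window (?c + s)"
      using block_sequence_window[where xs = xs and j = "m * L + s", OF xs] that by simp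
    finally show ?thesis
      by (simp add: window_mod_L)
  qed
  then have "block_count (\<lambda>t. block_sequence xs (m * L + t)) b L = card {s. s < L \<and> window ((?c + s) mod L) = b}"
    unfolding block_count_def using b by (intro arg_cong[where f = card]) auto
  also have "\<dots> = k"
    using card_shift_mod[OF c, of "\<lambda>s. window s = b"] card_window_eq[OF b] by simp
  finally have last_block: "block_count (\<lambda>t. block_sequence xs (m * L + t)) b L = k" .
  have "block_count (block_sequence xs) b (Suc m * L) = block_count (block_sequence xs) b (m * L + L)"
    by (simp add: add.commute)
  also have "\<dots> = block_count (block_sequence xs) b (m * L) + block_count (\<lambda>t. block_sequence xs (m * L + t)) b L"
    by (rule block_count_add)
  finally show ?case
    using Suc last_block by simp
qed (simp add: block_count_def)

lemma bounded_discrepancy_block_sequence: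
  assumes xs: "\<And>m. xs m < B"
  shows "bounded_discrepancy k (block_sequence xs)"
  unfolding bounded_discrepancy_def card_eq
proof (intro allI impI exI)
  fix b :: "'i list" and m
  assume b: "length b = k"
  define q r where "q = m div L" and "r = m mod L"
  have m: "m = q * L + r" "r < L"
    using div_mult_mod_eq[of m L] k_lt_L by (simp_all add: q_def r_def)
  have "block_count (block_sequence xs) b m =
      block_count (block_sequence xs) b (q * L) + block_count (\<lambda>t. block_sequence xs (q * L + t)) b r"
    unfolding m(1) by (rule block_count_add)
  also have "block_count (block_sequence xs) b (q * L) = q * k"
    by (rule block_count_block_sequence[where xs = xs, OF xs b])
  finally have "block_count (block_sequence xs) b m = q * k + block_count (\<lambda>t. block_sequence xs (q * L + t)) b r" .
  then have count: "real q * real k \<le> real (block_count (block_sequence xs) b m)"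
      "real (block_count (block_sequence xs) b m) \<le> real q * real k + real r"
    using block_count_le[of _ b r] by (simp_all flip: of_nat_mult of_nat_add)
  have "0 < real B ^ k"
    using B_ge2 by simp
  then have "real m / real B ^ k = real q * real k + real r * real k / real L"
    using k_pos by (simp add: m(1) L_def N_def field_simps)
  moreover have "real r * real k / real L \<le> real k"
    using m(2) by (simp add: divide_le_eq mult.commute mult_left_mono)
  moreover have "0 \<le> real r * real k / real L"
    by simp
  ultimately show "\<bar>real (block_count (block_sequence xs) b m) - real m / real B ^ k\<bar> \<le> real L + real k"
    using count m(2) by (simp only: abs_le_iff) (intro conjI; linarith)
qed

end


section \<open>The simplex of fixed points of rotations\<close>

locale normal_cover = homothety_ifs lam p + numeral_word e k B
  for lam :: "real^'i::finite" and p :: "'i \<Rightarrow> 'a::euclidean_space" and e :: "nat \<Rightarrow> 'i" and k B :: nat +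
  assumes affine_hull_p: "affine hull (range p) = UNIV"
    and ratio_ge: "real DIM('a) / (real DIM('a) + 1) \<le> word_ratio (cycle_word 0)"
begin

definition rho :: real where
  "rho = word_ratio (cycle_word 0)"

definition rot_fixpoint :: "nat \<Rightarrow> 'a" where
  "rot_fixpoint x = fixpoint (cycle_word (k * x))"

definition Delta :: "'a set" where
  "Delta = convex hull (rot_fixpoint ` {..<B})"

definition normal_open :: "'a set" where
  "normal_open = (\<Union>u. foldr S u ` interior Delta)"

lemma cycle_word_nonempty: "cycle_word s \<noteq> []"
  using k_lt_L by (simp add: cycle_word_def)

lemma word_ratio_cycle_word: "word_ratio (cycle_word s) = rho"
proof (induction s)
  case (Suc s)
  have "cycle_word (Suc s) = drop 1 (cycle_word s) @ take 1 (cycle_word s)"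
    using cycle_word_shift[of 1 s] k_lt_L by simp
  then have "word_ratio (cycle_word (Suc s)) = word_ratio (drop 1 (cycle_word s)) * word_ratio (take 1 (cycle_word s))"
    by (simp only: word_ratio_append)
  also have "\<dots> = word_ratio (take 1 (cycle_word s) @ drop 1 (cycle_word s))"
    by (simp only: word_ratio_append mult.commute)
  also have "\<dots> = word_ratio (cycle_word s)"
    by (simp only: append_take_drop_id)
  finally show ?case
    using Suc.IH by (rule trans)
qed (simp add: rho_def)

lemma foldr_S_cycle_word: "foldr S (cycle_word (k * x)) y = rho *\<^sub>R y + (1 - rho) *\<^sub>R rot_fixpoint x"
  using foldr_S_fixpoint[OF cycle_word_nonempty] by (simp add: rot_fixpoint_def word_ratio_cycle_word)

lemma p_mem_affine_hull_step:
  assumes "v @ w = cycle_word (k * x)" "w @ v = cycle_word (k * x')" "x < B" "x' < B"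
    and "e x \<in> set v" and "\<And>c. c \<in> set v \<Longrightarrow> c \<noteq> e x \<Longrightarrow> p c \<in> affine hull (rot_fixpoint ` {..<B})"
  shows "p (e x) \<in> affine hull (rot_fixpoint ` {..<B})"
proof -
  have "rot_fixpoint x = foldr S v (rot_fixpoint x')"
    unfolding rot_fixpoint_def using fixpoint_append[of v w] assms(1,2) cycle_word_nonempty by metis
  then have comb: "rot_fixpoint x = word_ratio v *\<^sub>R rot_fixpoint x' + (\<Sum>c\<in>UNIV. weight v c *\<^sub>R p c)"
    by (simp add: foldr_S_weights)
  show ?thesis
  proof (rule mem_affine_if_affine_combination[OF _ _ _ _ _ comb word_ratio_plus_weights])
    show "rot_fixpoint x \<in> affine hull (rot_fixpoint ` {..<B})" "rot_fixpoint x' \<in> affine hull (rot_fixpoint ` {..<B})"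
      using assms(3,4) by (auto intro: hull_inc)
    show "weight v (e x) \<noteq> 0"
      using weight_pos[OF assms(5)] by simp
    show "p c \<in> affine hull (rot_fixpoint ` {..<B})" if "c \<in> UNIV" "c \<noteq> e x" "weight v c \<noteq> 0" for c
      using assms(6) that weight_eq_0 by blast
  qed simp_all
qed

lemma p_mem_affine_hull_Suc:
  assumes x: "x + 1 < B" and zero: "0 < x \<Longrightarrow> p (e 0) \<in> affine hull (rot_fixpoint ` {..<B})"
  shows "p (e x) \<in> affine hull (rot_fixpoint ` {..<B})"
proof -
  let ?v = "take k (cycle_word (k * x))" and ?w = "drop k (cycle_word (k * x))"
  have "x < B"
    using x by simp
  show ?thesis
  proof (rule p_mem_affine_hull_step[of ?v ?w x "x + 1"])
    show "?w @ ?v = cycle_word (k * (x + 1))"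
      using cycle_word_shift[of k "k * x"] k_lt_L by (simp add: algebra_simps)
    show "e x \<in> set ?v"
      using take_cycle_word[OF \<open>x < B\<close>] by simp
    fix c
    assume c: "c \<in> set ?v" "c \<noteq> e x"
    then have "c = e 0"
      using take_cycle_word[OF \<open>x < B\<close>] by (auto simp: set_replicate_conv_if split: if_splits)
    with c(2) have "0 < x"
      by (cases x) auto
    with \<open>c = e 0\<close> zero show "p c \<in> affine hull (rot_fixpoint ` {..<B})"
      by simp
  qed (use x in simp_all)
qed

lemma p_mem_affine_hull_last:
  assumes below: "\<And>y. y < B - 1 \<Longrightarrow> p (e y) \<in> affine hull (rot_fixpoint ` {..<B})"
  shows "p (e (B - 1)) \<in> affine hull (rot_fixpoint ` {..<B})"
proof -
  let ?j = "k * (B - 1)"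
  have "k * (B - 1) + k = k * B" "k * B \<le> L"
    using B_ge2 B_le_N by (simp_all add: L_def algebra_simps)
  then have j: "?j + (k - 1) < L" "?j \<le> L"
    using k_pos by linarith+
  let ?v = "drop ?j (cycle_word 0)" and ?w = "take ?j (cycle_word 0)"
  show ?thesis
  proof (rule p_mem_affine_hull_step[of ?v ?w "B - 1" 0])
    show "?v @ ?w = cycle_word (k * (B - 1))"
      using cycle_word_shift[OF j(2), of 0] by simp
    have "?v ! (k - 1) = letter (k * (B - 1) + (k - 1))"
      using j by (simp add: cycle_word_def)
    also have "\<dots> = e (B - 1)"
      using letter_last[of "B - 1"] B_ge2 by simp
    finally show "e (B - 1) \<in> set ?v"
      using j by (metis nth_mem length_drop length_map length_upt cycle_word_def add_diff_cancel_left'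
          less_diff_conv add.commute)
    fix c
    assume c: "c \<in> set ?v" "c \<noteq> e (B - 1)"
    obtain y where "y < B" "c = e y"
      using e_surj by blast
    with c(2) have "y < B - 1"
      by (cases "y = B - 1") auto
    with \<open>c = e y\<close> below show "p c \<in> affine hull (rot_fixpoint ` {..<B})"
      by simp
  qed (use B_ge2 in simp_all)
qed

lemma p_mem_affine_hull: "x < B \<Longrightarrow> p (e x) \<in> affine hull (rot_fixpoint ` {..<B})"
proof (induction x rule: less_induct)
  case (less x)
  show ?case
  proof (cases "x + 1 < B")
    case True
    then show ?thesis
      by (rule p_mem_affine_hull_Suc) (use less in auto)
  next
    case False
    with less.prems have x: "x = B - 1"
      by simp
    have "p (e (B - 1)) \<in> affine hull (rot_fixpoint ` {..<B})"
      by (rule p_mem_affine_hull_last) (use less x in auto)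
    with x show ?thesis
      by simp
  qed
qed

lemma affine_hull_rot_fixpoints: "affine hull (rot_fixpoint ` {..<B}) = UNIV"
proof -
  have "p c \<in> affine hull (rot_fixpoint ` {..<B})" for c
  proof -
    obtain x where "x < B" "c = e x"
      using e_surj by blast
    then show ?thesis
      using p_mem_affine_hull by simp
  qed
  then have "range p \<subseteq> affine hull (rot_fixpoint ` {..<B})"
    by blast
  then have "affine hull (range p) \<subseteq> affine hull (rot_fixpoint ` {..<B})"
    by (simp add: hull_minimal)
  then show ?thesis
    using affine_hull_p by auto
qed

lemma interior_Delta_nonempty: "interior Delta \<noteq> {}"
proof -
  have "affine hull Delta = UNIV"
    using affine_hull_rot_fixpoints by (simp add: Delta_def affine_hull_convex_hull)
  moreover have "rel_interior Delta \<noteq> {}"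
    using rel_interior_eq_empty[of Delta] B_ge2 by (auto simp: Delta_def convex_convex_hull lessThan_empty_iff)
  ultimately show ?thesis
    using rel_interior_interior by auto
qed

lemma compact_Delta: "compact Delta"
  unfolding Delta_def by (intro compact_convex_hull finite_imp_compact) simp

lemma Delta_self_cover:
  assumes "y \<in> Delta"
  shows "\<exists>x y'. x \<in> {..<B} \<and> y' \<in> Delta \<and> y = foldr S (cycle_word (k * x)) y'"
proof -
  obtain v y' where "v \<in> rot_fixpoint ` {..<B}" "y' \<in> Delta" "y = rho *\<^sub>R y' + (1 - rho) *\<^sub>R v"
    using convex_hull_homothetic_cover[OF _ ratio_ge[folded rho_def]] assms unfolding Delta_def by metis
  then show ?thesis
    by (auto simp: foldr_S_cycle_word)
qed

lemma Delta_subset_codings: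
  assumes "y \<in> Delta"
  shows "\<exists>xs. (\<forall>m. xs m < B) \<and> coding S (block_sequence xs) = y"
proof -
  have "\<exists>xs ys. ys 0 = y \<and> (\<forall>n. xs n \<in> {..<B} \<and> ys n \<in> Delta \<and> foldr S (cycle_word (k * xs n)) (ys (Suc n)) = ys n)"
    by (rule backward_orbit[OF assms Delta_self_cover])
  then obtain xs ys where ys0: "ys 0 = y"
    and ys: "\<forall>n. xs n \<in> {..<B} \<and> ys n \<in> Delta \<and> foldr S (cycle_word (k * xs n)) (ys (Suc n)) = ys n"
    by blast
  have xs_lt: "xs n < B" and ys_Delta: "ys n \<in> Delta" for n
    using ys by simp_all
  have prefix: "y = foldr S (map (block_sequence xs) [0..<m * L]) (ys m)" for m
  proof (induction m)
    case (Suc m)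
    have "map (block_sequence xs) [0..<Suc m * L] = map (block_sequence xs) [0..<m * L] @ cycle_word (k * xs m)"
      using block_sequence_prefix[of xs m] by (simp add: add.commute)
    with Suc ys show ?case
      by simp
  qed (simp add: ys0)
  obtain C where C: "\<forall>v\<in>Delta. norm v \<le> C"
    using compact_imp_bounded[OF compact_Delta] bounded_iff by blast
  have "y = coding S (block_sequence xs)"
  proof (rule coding_eq_if_bounded_tails[of ys C y "block_sequence xs" "\<lambda>m. m * L"])
    show "norm (ys m) \<le> C" for m
      using ys_Delta C by blast
    show "m \<le> m * L" for m
      using k_lt_L by simp
  qed (rule prefix)
  with xs_lt show ?thesis
    by blast
qed

lemma normal_open_subset_normal_points: "normal_open \<subseteq> normal_points k S"
proof
  fix z
  assume "z \<in> normal_open"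
  then obtain u v where z: "z = foldr S u v" "v \<in> interior Delta"
    unfolding normal_open_def by blast
  then obtain xs where xs: "\<forall>m. xs m < B" "coding S (block_sequence xs) = v"
    using Delta_subset_codings interior_subset by blast
  have "simply_normal k (prepend u (block_sequence xs))"
    using xs by (intro simply_normal_if_bounded_discrepancy bounded_discrepancy_prepend
        bounded_discrepancy_block_sequence) auto
  moreover have "coding S (prepend u (block_sequence xs)) = z"
    using coding_prepend xs z by simp
  ultimately show "z \<in> normal_points k S"
    unfolding normal_points_def attractor_eq_range_coding by blast
qed

lemma open_normal_open: "open normal_open"
  unfolding normal_open_def by (intro open_UN ballI open_foldr_S_image open_interior)

lemma attractor_subset_closure_normal_open: "attractor S \<subseteq> closure normal_open"
proof
  fix x
  assume "x \<in> attractor S"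
  then obtain a where x: "x = coding S a"
    by (auto simp: attractor_eq_range_coding)
  obtain v where "v \<in> interior Delta"
    using interior_Delta_nonempty by auto
  then have "\<forall>j. foldr S (map a [0..<j]) v \<in> normal_open"
    unfolding normal_open_def by blast
  moreover have "(\<lambda>j. foldr S (map a [0..<j]) v) \<longlonglongrightarrow> x"
    unfolding x by (rule prefix_tendsto_coding_from)
  ultimately show "x \<in> closure normal_open"
    unfolding closure_sequential by (intro exI[of _ "\<lambda>j. foldr S (map a [0..<j]) v"]) simp
qed

section \<open>Normal points: open, dense and of full measure\<close>

lemma small_copies_near_attractor:
  "\<exists>K>0. \<forall>x\<in>attractor S. \<forall>d>0.
      \<exists>u. word_ratio u * K < d \<and> foldr S u ` interior Delta \<subseteq> ball x (word_ratio u * K)"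
proof -
  obtain M where M: "\<forall>v\<in>Delta. norm v \<le> M"
    using compact_imp_bounded[OF compact_Delta] bounded_iff by blast
  obtain v0 where "v0 \<in> interior Delta"
    using interior_Delta_nonempty by auto
  then have "0 \<le> M"
    using M interior_subset norm_ge_zero order_trans by blast
  define K where "K = M + p_bound + 1"
  have K: "0 < K"
    using \<open>0 \<le> M\<close> p_bound_nonneg by (simp add: K_def)
  show ?thesis
  proof (intro exI[of _ K] conjI ballI allI impI K)
    fix x d
    assume "x \<in> attractor S" "0 < (d::real)"
    then obtain a where x: "x = coding S a"
      by (auto simp: attractor_eq_range_coding)
    have "eventually (\<lambda>j. lam_max ^ j * K < d) sequentially"
      using order_tendstoD(2)[OF lam_max_power_tendsto_0 \<open>0 < d\<close>] .
    then obtain j0 where "\<forall>j\<ge>j0. lam_max ^ j * K < d"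
      unfolding eventually_sequentially by blast
    then have j: "lam_max ^ j0 * K < d"
      by simp
    let ?u = "map a [0..<j0]"
    have "word_ratio ?u * K \<le> lam_max ^ j0 * K"
      using word_ratio_le_power[of ?u] K by simp
    with j have "word_ratio ?u * K < d"
      by linarith
    moreover have "foldr S ?u ` interior Delta \<subseteq> ball x (word_ratio ?u * K)"
    proof
      fix z
      assume "z \<in> foldr S ?u ` interior Delta"
      then obtain v where v: "v \<in> Delta" "z = foldr S ?u v"
        using interior_subset by blast
      have "dist x z \<le> word_ratio ?u * (p_bound + norm v)"
        unfolding x v(2) by (rule dist_coding_prefix_image)
      also have "\<dots> < word_ratio ?u * K"
        using M v(1) word_ratio_pos[of ?u] by (intro mult_strict_left_mono) (auto simp: K_def)
      finally show "z \<in> ball x (word_ratio ?u * K)"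
        by simp
    qed
    ultimately show "\<exists>u. word_ratio u * K < d \<and> foldr S u ` interior Delta \<subseteq> ball x (word_ratio u * K)"
      by blast
  qed
qed

lemma negligible_attractor_diff_normal_open: "negligible (attractor S - normal_open)"
proof -
  let ?\<mu> = "measure lebesgue" and ?E = "attractor S - normal_open"
  have E: "?E \<in> lmeasurable"
    using compact_range_coding open_normal_open
    by (intro lmeasurable_compact) (simp add: attractor_eq_range_coding Diff_eq compact_Int_closed closed_Compl)
  obtain K where K: "0 < K"
    and small: "\<forall>x\<in>attractor S. \<forall>d>0.
          \<exists>u. word_ratio u * K < d \<and> foldr S u ` interior Delta \<subseteq> ball x (word_ratio u * K)"
    using small_copies_near_attractor by blast
  have interior_lmeasurable: "interior Delta \<in> lmeasurable"
    using compact_imp_bounded[OF compact_Delta] by (intro lmeasurable_open) (auto intro: bounded_subset interior_subset)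
  have "0 < ?\<mu> (interior Delta)"
    using open_not_negligible[OF open_interior interior_Delta_nonempty] interior_lmeasurable
    by (simp add: negligible_iff_measure0 order_less_le)
  moreover have ball_pos: "0 < ?\<mu> (ball (0::'a) 1)"
    using content_ball_pos[of 1 "0::'a"] by simp
  define c where "c = ?\<mu> (interior Delta) / (K ^ DIM('a) * ?\<mu> (ball (0::'a) 1))"
  ultimately have c: "0 < c"
    using K by (simp add: c_def)
  show ?thesis
  proof (rule negligible_if_density_gaps[OF E c])
    fix x d
    assume "x \<in> ?E" "0 < (d::real)"
    then obtain u where u: "word_ratio u * K < d" "foldr S u ` interior Delta \<subseteq> ball x (word_ratio u * K)"
      using small by blast
    let ?r = "word_ratio u * K"
    have r: "0 < ?r"
      using word_ratio_pos K by simp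
    have "c * ?\<mu> (ball x ?r) = ?\<mu> (foldr S u ` interior Delta)"
      using content_ball_conv_unit_ball[of ?r x] r K ball_pos
      by (simp add: measure_foldr_S_image c_def power_mult_distrib field_simps)
    also have "\<dots> \<le> ?\<mu> (ball x ?r - ?E)"
    proof (rule measure_mono_fmeasurable)
      show "foldr S u ` interior Delta \<subseteq> ball x ?r - ?E"
        using u(2) unfolding normal_open_def by blast
      show "foldr S u ` interior Delta \<in> sets lebesgue"
        using bounded_subset[OF bounded_ball u(2)]
        by (intro fmeasurableD lmeasurable_open open_foldr_S_image open_interior)
      show "ball x ?r - ?E \<in> fmeasurable lebesgue"
        using E by (intro fmeasurable_Diff) auto
    qed
    finally show "\<exists>r. 0 < r \<and> r < d \<and> c * ?\<mu> (ball x r) \<le> ?\<mu> (ball x r - ?E)"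
      using r u(1) by blast
  qed
qed

lemma normal_points_open_dense_and_full:
  "(\<exists>U. openin (top_of_set (attractor S)) U \<and> attractor S \<subseteq> closure U \<and> U \<subseteq> normal_points k S) \<and>
   (AE x in lebesgue. x \<in> attractor S \<longrightarrow> x \<in> normal_points k S)"
proof (intro conjI exI)
  have "normal_open \<subseteq> attractor S"
    using normal_open_subset_normal_points by (auto simp: normal_points_def)
  then show "openin (top_of_set (attractor S)) normal_open"
    using open_normal_open by (auto simp: openin_open)
  show "attractor S \<subseteq> closure normal_open"
    by (rule attractor_subset_closure_normal_open)
  show "normal_open \<subseteq> normal_points k S"
    by (rule normal_open_subset_normal_points)
  show "AE x in lebesgue. x \<in> attractor S \<longrightarrow> x \<in> normal_points k S"
  proof (rule AE_I')
    show "attractor S - normal_open \<in> null_sets lebesgue"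
      using negligible_attractor_diff_normal_open by (simp add: negligible_iff_null_sets)
  qed (use normal_open_subset_normal_points in auto)
qed

end

lemma card_ge2_if_affine_hull_UNIV:
  fixes p :: "'i::finite \<Rightarrow> 'a::euclidean_space"
  assumes "affine hull (range p) = UNIV"
  shows "2 \<le> CARD('i)"
proof (rule ccontr)
  assume "\<not> 2 \<le> CARD('i)"
  moreover have "0 < CARD('i)"
    by simp
  ultimately have "CARD('i) = 1"
    by linarith
  then obtain i0 :: 'i where "UNIV = {i0}"
    by (rule card_1_singletonE)
  then have "(UNIV :: 'a set) = {p i0}"
    using assms by (metis affine_hull_sing image_insert image_empty)
  moreover have "p i0 + (SOME b. b \<in> Basis) \<noteq> p i0"
    using SOME_Basis nonzero_Basis by force
  ultimately show False
    by blast
qed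

lemma normal_cover_if_mem_param_set:
  fixes lam :: "real^'i::finite" and p :: "'i \<Rightarrow> 'a::euclidean_space" and e :: "nat \<Rightarrow> 'i"
  assumes lam: "lam \<in> param_set DIM('a) k" and e: "bij_betw e {..<CARD('i)} UNIV"
    and k: "1 \<le> k" and p: "affine hull (range p) = UNIV"
  shows "normal_cover lam p e k CARD('i)"
proof -
  interpret homothety_ifs lam p
    using lam by unfold_locales (auto simp: param_set_def)
  interpret numeral_word e k "CARD('i)"
    using e k card_ge2_if_affine_hull_UNIV[OF p] by unfold_locales auto
  have "word_ratio (cycle_word 0) = (\<Prod>s<L. lam $ letter s)"
    by (simp add: word_ratio_def cycle_word_def prod.distinct_set_conv_list[symmetric] atLeast0LessThan)
  also have "\<dots> = (\<Prod>c\<in>UNIV. (lam $ c) ^ (k * CARD('i) ^ (k - 1)))"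
    by (rule prod_letters)
  finally show ?thesis
    using lam p by unfold_locales (simp_all add: param_set_def)
qed

theorem theorem3p2:
  fixes p :: "'i::finite \<Rightarrow> 'a::euclidean_space" and k :: nat
  assumes "inj p"
    and "affine hull (range p) = UNIV"
    and "k \<ge> 1"
  shows "\<exists>Opn \<subseteq> (param_set DIM('a) k :: (real^'i) set).
           openin (top_of_set (param_set DIM('a) k)) Opn \<and>
           param_set DIM('a) k \<subseteq> closure Opn \<and>
           (\<forall>lam \<in> Opn.
              (\<exists>U. openin (top_of_set (attractor (ifs_map lam p))) U \<and>
                   attractor (ifs_map lam p) \<subseteq> closure U \<and>
                   U \<subseteq> normal_points k (ifs_map lam p)) \<and>
              (AE x in lebesgue. x \<in> attractor (ifs_map lam p) \<longrightarrow>
                   x \<in> normal_points k (ifs_map lam p)))"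
proof (intro exI[of _ "param_set DIM('a) k"] conjI ballI)
  obtain e :: "nat \<Rightarrow> 'i" where e: "bij_betw e {..<CARD('i)} UNIV"
    using ex_bij_betw_nat_finite[of "UNIV :: 'i set"] by (auto simp: atLeast0LessThan)
  fix lam :: "real^'i"
  assume lam: "lam \<in> param_set DIM('a) k"
  interpret normal_cover lam p e k "CARD('i)"
    by (rule normal_cover_if_mem_param_set[OF lam e assms(3,2)])
  show "(\<exists>U. openin (top_of_set (attractor (ifs_map lam p))) U \<and>
          attractor (ifs_map lam p) \<subseteq> closure U \<and> U \<subseteq> normal_points k (ifs_map lam p))"
    "AE x in lebesgue. x \<in> attractor (ifs_map lam p) \<longrightarrow> x \<in> normal_points k (ifs_map lam p)"
    using normal_points_open_dense_and_full by blast+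
qed (auto intro: closure_subset[THEN subsetD])

end
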